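(* Let $m,q\ge1$, and let $r$ be a uniformly random seed. For any distributions $\mu_1,\dots,\mu_m\in\Delta_q$, $$\mathbb P_r\big[\exists i,j\in[m]:\ \mathrm{MinCoupler}(\mu_i,r)\ne\mathrm{MinCoupler}(\mu_j,r)\big]\le\frac{\sum_{x\in[q]}\big(\max_{i\in[m]}\mu_i(x)-\min_{i\in[m]}\mu_i(x)\big)}{\sum_{x\in[q]}\max_{i\in[m]}\mu_i(x)}.$$
   Context: $\Delta_q=\{\nu\in[0,1]^q:\sum_x\nu(x)=1\}$. The random seed $r$ is an infinite sequence of i.i.d. pairs $(x_1,p_1),(x_2,p_2),\dots$ with $x_k$ uniform on $[q]$ and $p_k$ uniform on $[0,1]$, independent. $\mathrm{MinCoupler}(\nu,r)$ outputs $x_{i^*}$, where $i^*=\min\{k\ge1: p_k\le\nu(x_k)\}$. *)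

theory Defs
  imports "HOL-Probability.Probability"
begin

text \<open>[q] is rendered as {0..<q}. A distribution on [q] is a function nat => real,
  with values in [0,1] on [q], zero outside [q], summing to 1 over [q].\<close>
definition prob_simplex :: "nat \<Rightarrow> (nat \<Rightarrow> real) set" where
  "prob_simplex q = {\<nu>. (\<forall>x<q. 0 \<le> \<nu> x \<and> \<nu> x \<le> 1) \<and> (\<forall>x\<ge>q. \<nu> x = 0) \<and> (\<Sum>x<q. \<nu> x) = 1}"

definition seed_pair_measure :: "nat \<Rightarrow> (nat \<times> real) measure" where
  "seed_pair_measure q = uniform_count_measure {0..<q} \<Otimes>\<^sub>M uniform_measure lborel {0..1}"

text \<open>The random seed r = ((x_1,p_1),(x_2,p_2),...) as an i.i.d. sequence, indexed from 0.\<close>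
definition seed_measure :: "nat \<Rightarrow> (nat \<Rightarrow> nat \<times> real) measure" where
  "seed_measure q = (\<Pi>\<^sub>M k\<in>(UNIV::nat set). seed_pair_measure q)"

text \<open>MinCoupler(nu, r) = x_{i*}, i* = least k with p_k <= nu(x_k).
  (If no such k exists -- a null event -- the output is unspecified.)\<close>
definition MinCoupler :: "(nat \<Rightarrow> real) \<Rightarrow> (nat \<Rightarrow> nat \<times> real) \<Rightarrow> nat" where
  "MinCoupler \<nu> r = fst (r (LEAST k. snd (r k) \<le> \<nu> (fst (r k))))"

end

theory Submission
  imports Defs
begin

text \<open>Let \<open>hi x\<close> and \<open>lo x\<close> be the largest and smallest of the values \<open>\<mu>\<^sub>i x\<close>. A seed pair
  \<open>(x, p)\<close> with \<open>p > hi x\<close> is rejected by every \<open>\<mu>\<^sub>i\<close>, so all couplers stop at the same first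
  pair that is not rejected; if that pair has \<open>p \<le> lo x\<close> it is accepted by every \<open>\<mu>\<^sub>i\<close>, so the
  couplers can only disagree when \<open>p\<close> falls into the gap \<open>lo x < p \<le> hi x\<close>. A pair is rejected
  with probability \<open>\<alpha> = 1 - (\<Sum>\<^sub>x hi x) / q\<close> and lies in the gap with probability
  \<open>\<beta> = (\<Sum>\<^sub>x (hi x - lo x)) / q\<close>, so a gap pair after a run of rejections has probability at most
  \<open>\<Sum>\<^sub>k \<alpha>\<^sup>k \<beta> = \<beta> / (1 - \<alpha>)\<close>, which is the claimed ratio.\<close>

lemma measure_hit_before_exit_le:
  fixes M :: "'a measure"
  assumes "prob_space M" and A: "A \<in> sets M" and B: "B \<in> sets M" and "measure M A < 1"
  defines "H \<equiv> {\<omega> \<in> space (\<Pi>\<^sub>M k\<in>(UNIV::nat set). M). \<exists>k. (\<forall>j<k. \<omega> j \<in> A) \<and> \<omega> k \<in> B}"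
  shows "H \<in> sets (\<Pi>\<^sub>M k\<in>(UNIV::nat set). M)"
    and "measure (\<Pi>\<^sub>M k\<in>(UNIV::nat set). M) H \<le> measure M B / (1 - measure M A)"
proof -
  interpret M: prob_space M by fact
  interpret P: product_prob_space "\<lambda>_. M" "UNIV :: nat set"
    by unfold_locales
  let ?P = "\<Pi>\<^sub>M k\<in>(UNIV::nat set). M"
  define E where "E k = prod_emb UNIV (\<lambda>_. M) {..k} (\<Pi>\<^sub>E j\<in>{..k}. if j < k then A else B)" for k :: nat
  have E_sets: "range E \<subseteq> sets ?P"
    unfolding E_def using A B by (auto intro!: sets_PiM_I)
  have "\<omega> \<in> E k \<longleftrightarrow> \<omega> \<in> space ?P \<and> (\<forall>j<k. \<omega> j \<in> A) \<and> \<omega> k \<in> B" for \<omega> k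
    by (force simp: E_def prod_emb_iff space_PiM PiE_iff)
  then have H_eq: "H = (\<Union>k. E k)"
    unfolding H_def by blast
  then show "H \<in> sets ?P"
    using E_sets by auto
  have measure_E: "measure ?P (E k) = measure M A ^ k * measure M B" for k
  proof -
    have "emeasure ?P (E k) = (\<Prod>j\<in>{..k}. emeasure M (if j < k then A else B))"
      unfolding E_def using A B M.prob_space_axioms by (intro emeasure_PiM_emb) auto
    also have "\<dots> = (\<Prod>j<k. emeasure M A) * emeasure M B"
      by (simp add: lessThan_Suc_atMost[symmetric])
    finally have "ennreal (measure ?P (E k)) = ennreal (measure M A ^ k * measure M B)"
      by (simp add: P.emeasure_eq_measure M.emeasure_eq_measure ennreal_power ennreal_mult)
    then show ?thesis
      by (simp add: ennreal_inj)
  qed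
  have "(\<lambda>k. measure M A ^ k) sums (1 / (1 - measure M A))"
    using assms(4) by (intro geometric_sums) simp
  from sums_mult2[OF this, of "measure M B"]
  have sums: "(\<lambda>k. measure ?P (E k)) sums (measure M B / (1 - measure M A))"
    by (simp add: measure_E)
  have "measure ?P H \<le> (\<Sum>k. measure ?P (E k))"
    unfolding H_eq using E_sets sums
    by (intro P.P.finite_measure_subadditive_countably) (auto simp: sums_summable)
  also have "\<dots> = measure M B / (1 - measure M A)"
    using sums_unique[OF sums] by simp
  finally show "measure ?P H \<le> measure M B / (1 - measure M A)" .
qed

lemma prob_space_seed_pair_measure: "q \<ge> 1 \<Longrightarrow> prob_space (seed_pair_measure q)"
  unfolding seed_pair_measure_def
  by (intro prob_space_pair prob_space_uniform_count_measure prob_space_uniform_measure) auto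

lemma measurable_fst_seed_pair [measurable]: "fst \<in> seed_pair_measure q \<rightarrow>\<^sub>M count_space UNIV"
  unfolding seed_pair_measure_def
  by (rule measurable_compose[OF measurable_fst])
     (simp add: measurable_cong_sets[OF sets_uniform_count_measure_count_space refl])

lemma borel_measurable_snd_seed_pair [measurable]: "snd \<in> borel_measurable (seed_pair_measure q)"
  unfolding seed_pair_measure_def
  by (rule measurable_compose[OF measurable_snd])
     (simp add: measurable_cong_sets[OF sets_uniform_measure refl])

lemma mem_Sigma_iff_fst_snd: "p \<in> Sigma A F \<longleftrightarrow> fst p \<in> A \<and> snd p \<in> F (fst p)"
  by (cases p) simp

lemma Sigma_eq_UN_Times: "Sigma A F = (\<Union>x\<in>A. {x} \<times> F x)"
  by auto

lemma sets_seed_pair_Sigma: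
  assumes "\<And>x. x < q \<Longrightarrow> F x \<in> sets borel"
  shows "Sigma {0..<q} F \<in> sets (seed_pair_measure q)"
  unfolding Sigma_eq_UN_Times[of "{0..<q}" F] seed_pair_measure_def using assms
  by (intro sets.finite_UN ballI pair_measureI) (auto simp: sets_uniform_count_measure)

lemma measure_seed_pair_Sigma:
  assumes q: "q \<ge> 1" and F: "\<And>x. x < q \<Longrightarrow> F x \<in> sets borel"
  shows "measure (seed_pair_measure q) (Sigma {0..<q} F)
           = (\<Sum>x<q. measure lborel ({0..1} \<inter> F x)) / q"
proof -
  interpret S: prob_space "seed_pair_measure q"
    using q by (rule prob_space_seed_pair_measure)
  interpret U: prob_space "uniform_measure lborel {0..1::real}"
    by (rule prob_space_uniform_measure) auto
  have slice: "measure (seed_pair_measure q) ({x} \<times> F x) = measure lborel ({0..1} \<inter> F x) / q"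
    if x: "x < q" for x
  proof -
    have "emeasure (seed_pair_measure q) ({x} \<times> F x)
        = emeasure (uniform_count_measure {0..<q}) {x} * emeasure (uniform_measure lborel {0..1}) (F x)"
      unfolding seed_pair_measure_def using x F
      by (intro U.emeasure_pair_measure_Times) (auto simp: sets_uniform_count_measure)
    also have "\<dots> = ennreal (1 / q) * ennreal (measure lborel ({0..1} \<inter> F x))"
      using x F by (simp add: emeasure_uniform_count_measure U.emeasure_eq_measure divide_ennreal
                              ennreal_of_nat_eq_real_of_nat)
    finally show ?thesis
      by (simp add: S.emeasure_eq_measure ennreal_mult[symmetric] ennreal_inj)
  qed
  have "measure (seed_pair_measure q) (Sigma {0..<q} F)
      = (\<Sum>x\<in>{0..<q}. measure (seed_pair_measure q) ({x} \<times> F x))"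
    unfolding Sigma_eq_UN_Times[of "{0..<q}" F] using F S.emeasure_finite
    by (intro measure_finite_Union)
       (auto simp: disjoint_family_on_def seed_pair_measure_def sets_uniform_count_measure
             intro!: pair_measureI)
  also have "\<dots> = (\<Sum>x<q. measure lborel ({0..1} \<inter> F x)) / q"
    by (simp add: slice sum_divide_distrib atLeast0LessThan)
  finally show ?thesis .
qed

lemma measure_seed_pair_reject:
  assumes "q \<ge> 1" and "\<And>x. x < q \<Longrightarrow> 0 \<le> hi x \<and> hi x \<le> 1"
  shows "measure (seed_pair_measure q) (Sigma {0..<q} (\<lambda>x. {hi x<..})) = 1 - (\<Sum>x<q. hi x) / q"
proof -
  have "{0..1} \<inter> {hi x<..} = {hi x<..1}" if "x < q" for x
    using assms(2)[OF that] by auto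
  then have "measure (seed_pair_measure q) (Sigma {0..<q} (\<lambda>x. {hi x<..})) = (\<Sum>x<q. 1 - hi x) / q"
    using assms by (simp add: measure_seed_pair_Sigma)
  then show ?thesis
    using assms(1) by (simp add: sum_subtractf field_simps)
qed

lemma measure_seed_pair_gap:
  assumes "q \<ge> 1" and "\<And>x. x < q \<Longrightarrow> 0 \<le> lo x \<and> lo x \<le> hi x \<and> hi x \<le> 1"
  shows "measure (seed_pair_measure q) (Sigma {0..<q} (\<lambda>x. {lo x<..hi x}))
           = (\<Sum>x<q. hi x - lo x) / q"
proof -
  have "{0..1} \<inter> {lo x<..hi x} = {lo x<..hi x}" if "x < q" for x
    using assms(2)[OF that] by auto
  then show ?thesis
    using assms by (simp add: measure_seed_pair_Sigma)
qed

lemma space_seed_measure_fst_less: "r \<in> space (seed_measure q) \<Longrightarrow> fst (r k) < q"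
  by (auto simp: seed_measure_def seed_pair_measure_def space_PiM PiE_iff space_pair_measure
                 space_uniform_count_measure mem_Times_iff)

lemma measurable_MinCoupler [measurable]:
  "MinCoupler \<nu> \<in> seed_measure q \<rightarrow>\<^sub>M count_space UNIV"
  unfolding MinCoupler_def seed_measure_def by measurable

lemma MinCoupler_eqI:
  assumes "\<And>j. j < k \<Longrightarrow> \<nu> (fst (r j)) < snd (r j)" and "snd (r k) \<le> \<nu> (fst (r k))"
  shows "MinCoupler \<nu> r = fst (r k)"
proof -
  have "(LEAST k. snd (r k) \<le> \<nu> (fst (r k))) = k"
    using assms by (intro Least_equality) (auto simp: not_less[symmetric])
  then show ?thesis
    unfolding MinCoupler_def by simp
qed

lemma MinCoupler_neq_imp_gap_after_rejections:
  assumes seed: "\<And>k. fst (r k) < q"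
    and \<nu>: "\<And>x. x < q \<Longrightarrow> lo x \<le> \<nu> x \<and> \<nu> x \<le> hi x"
    and \<nu>': "\<And>x. x < q \<Longrightarrow> lo x \<le> \<nu>' x \<and> \<nu>' x \<le> hi x"
    and disagree: "MinCoupler \<nu> r \<noteq> MinCoupler \<nu>' r"
  shows "\<exists>k. (\<forall>j<k. r j \<in> Sigma {0..<q} (\<lambda>x. {hi x<..})) \<and> r k \<in> Sigma {0..<q} (\<lambda>x. {lo x<..hi x})"
proof (cases "\<exists>k. snd (r k) \<le> hi (fst (r k))")
  case True
  define k where "k = (LEAST k. snd (r k) \<le> hi (fst (r k)))"
  have at_k: "snd (r k) \<le> hi (fst (r k))"
    unfolding k_def using True by (rule LeastI_ex)
  have before_k: "hi (fst (r j)) < snd (r j)" if "j < k" for j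
    using not_less_Least[OF that[unfolded k_def]] by simp
  have "\<not> snd (r k) \<le> lo (fst (r k))"
  proof
    assume "snd (r k) \<le> lo (fst (r k))"
    then have "MinCoupler \<mu> r = fst (r k)" if "\<And>x. x < q \<Longrightarrow> lo x \<le> \<mu> x \<and> \<mu> x \<le> hi x" for \<mu>
      using before_k seed that by (intro MinCoupler_eqI) (fastforce intro: order.trans le_less_trans)+
    with \<nu> \<nu>' disagree show False
      by metis
  qed
  then show ?thesis
    using at_k before_k seed by (intro exI[of _ k]) (auto simp: mem_Sigma_iff_fst_snd)
next
  case False
  \<comment> \<open>no pair is accepted by any \<open>\<mu> \<le> hi\<close>, so both couplers return the junk value
    \<open>fst (r (LEAST k. False))\<close>\<close>
  have "(\<lambda>k. snd (r k) \<le> \<mu> (fst (r k))) = (\<lambda>_. False)" if "\<And>x. x < q \<Longrightarrow> \<mu> x \<le> hi x" for \<mu>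
  proof
    fix k
    have "\<mu> (fst (r k)) \<le> hi (fst (r k))"
      using seed that by blast
    with False show "(snd (r k) \<le> \<mu> (fst (r k))) = False"
      by (metis order_trans)
  qed
  with \<nu> \<nu>' disagree show ?thesis
    unfolding MinCoupler_def by (metis (no_types, lifting))
qed

lemma Min_Max_values_bounds:
  fixes m :: nat and \<mu> :: "nat \<Rightarrow> nat \<Rightarrow> real"
  assumes "\<And>i. i < m \<Longrightarrow> \<mu> i \<in> prob_simplex q" and "i < m" and "x < q"
  shows "0 \<le> Min ((\<lambda>i. \<mu> i x) ` {..<m}) \<and> Min ((\<lambda>i. \<mu> i x) ` {..<m}) \<le> \<mu> i x
    \<and> \<mu> i x \<le> Max ((\<lambda>i. \<mu> i x) ` {..<m}) \<and> Max ((\<lambda>i. \<mu> i x) ` {..<m}) \<le> 1"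
proof -
  have "0 \<le> \<mu> j x \<and> \<mu> j x \<le> 1" if "j < m" for j
    using assms(1)[OF that] \<open>x < q\<close> by (simp add: prob_simplex_def)
  moreover have "finite ((\<lambda>i. \<mu> i x) ` {..<m})" and "(\<lambda>i. \<mu> i x) ` {..<m} \<noteq> {}"
    using \<open>i < m\<close> by auto
  ultimately show ?thesis
    using \<open>i < m\<close> by (auto simp: Min_ge_iff Max_le_iff intro!: Min_le Max_ge)
qed

lemma measure_MinCoupler_neq_le:
  fixes I :: "'i set" and \<mu> :: "'i \<Rightarrow> nat \<Rightarrow> real"
  assumes q: "q \<ge> 1" and "finite I"
    and range: "\<And>x. x < q \<Longrightarrow> 0 \<le> lo x \<and> lo x \<le> hi x \<and> hi x \<le> 1"
    and hi_sum: "0 < (\<Sum>x<q. hi x)"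
    and \<mu>: "\<And>i x. i \<in> I \<Longrightarrow> x < q \<Longrightarrow> lo x \<le> \<mu> i x \<and> \<mu> i x \<le> hi x"
  defines "D \<equiv> {r \<in> space (seed_measure q). \<exists>i\<in>I. \<exists>j\<in>I. MinCoupler (\<mu> i) r \<noteq> MinCoupler (\<mu> j) r}"
  shows "D \<in> sets (seed_measure q)"
    and "measure (seed_measure q) D \<le> (\<Sum>x<q. hi x - lo x) / (\<Sum>x<q. hi x)"
proof -
  interpret P: prob_space "seed_measure q"
    unfolding seed_measure_def using prob_space_seed_pair_measure[OF q] by (rule prob_space_PiM)
  define A where "A = Sigma {0..<q} (\<lambda>x. {hi x<..})"
  define B where "B = Sigma {0..<q} (\<lambda>x. {lo x<..hi x})"
  define H where "H = {r \<in> space (seed_measure q). \<exists>k. (\<forall>j<k. r j \<in> A) \<and> r k \<in> B}"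
  have measure_A: "measure (seed_pair_measure q) A = 1 - (\<Sum>x<q. hi x) / q"
    unfolding A_def using q by (intro measure_seed_pair_reject) (auto dest: range)
  have measure_B: "measure (seed_pair_measure q) B = (\<Sum>x<q. hi x - lo x) / q"
    unfolding B_def using q range by (intro measure_seed_pair_gap) auto
  have "measure (seed_pair_measure q) A < 1"
    using q hi_sum by (simp add: measure_A)
  with prob_space_seed_pair_measure[OF q]
  have "H \<in> sets (seed_measure q)"
    and H_le: "measure (seed_measure q) H
                 \<le> measure (seed_pair_measure q) B / (1 - measure (seed_pair_measure q) A)"
    unfolding H_def seed_measure_def A_def B_def
    by (intro measure_hit_before_exit_le sets_seed_pair_Sigma; simp)+
  moreover show D_sets: "D \<in> sets (seed_measure q)"
    unfolding D_def using \<open>finite I\<close> by measurable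
  moreover have "D \<subseteq> H"
  proof
    fix r assume "r \<in> D"
    then obtain i j where r: "r \<in> space (seed_measure q)" and "i \<in> I" "j \<in> I"
      and "MinCoupler (\<mu> i) r \<noteq> MinCoupler (\<mu> j) r"
      unfolding D_def by blast
    then show "r \<in> H"
      unfolding H_def A_def B_def using \<mu> space_seed_measure_fst_less[OF r]
      by (auto intro!: MinCoupler_neq_imp_gap_after_rejections[where \<nu> = "\<mu> i" and \<nu>' = "\<mu> j"])
  qed
  ultimately have "measure (seed_measure q) D \<le> measure (seed_measure q) H"
    by (intro P.finite_measure_mono)
  also note H_le
  also have "measure (seed_pair_measure q) B / (1 - measure (seed_pair_measure q) A)
      = (\<Sum>x<q. hi x - lo x) / (\<Sum>x<q. hi x)"
    using q hi_sum by (simp add: measure_A measure_B)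
  finally show "measure (seed_measure q) D \<le> (\<Sum>x<q. hi x - lo x) / (\<Sum>x<q. hi x)" .
qed

theorem lemma2p9:
  fixes m q :: nat and \<mu> :: "nat \<Rightarrow> nat \<Rightarrow> real"
  assumes "m \<ge> 1" and "q \<ge> 1"
    and "\<And>i. i < m \<Longrightarrow> \<mu> i \<in> prob_simplex q"
  shows "{r \<in> space (seed_measure q).
            \<exists>i<m. \<exists>j<m. MinCoupler (\<mu> i) r \<noteq> MinCoupler (\<mu> j) r} \<in> sets (seed_measure q)
    \<and> measure (seed_measure q)
        {r \<in> space (seed_measure q).
            \<exists>i<m. \<exists>j<m. MinCoupler (\<mu> i) r \<noteq> MinCoupler (\<mu> j) r}
      \<le> (\<Sum>x<q. Max ((\<lambda>i. \<mu> i x) ` {..<m}) - Min ((\<lambda>i. \<mu> i x) ` {..<m}))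
         / (\<Sum>x<q. Max ((\<lambda>i. \<mu> i x) ` {..<m}))"
proof -
  define hi where "hi x = Max ((\<lambda>i. \<mu> i x) ` {..<m})" for x
  define lo where "lo x = Min ((\<lambda>i. \<mu> i x) ` {..<m})" for x
  have bounds: "0 \<le> lo x \<and> lo x \<le> \<mu> i x \<and> \<mu> i x \<le> hi x \<and> hi x \<le> 1" if "i < m" "x < q" for i x
    unfolding hi_def lo_def using Min_Max_values_bounds[OF assms(3) that] .
  have range: "0 \<le> lo x \<and> lo x \<le> hi x \<and> hi x \<le> 1" if "x < q" for x
    using bounds[OF _ that, of 0] assms(1) by fastforce
  have "1 = (\<Sum>x<q. \<mu> 0 x)"
    using assms(1,3) by (simp add: prob_simplex_def)
  also have "\<dots> \<le> (\<Sum>x<q. hi x)"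
    using bounds assms(1) by (intro sum_mono) auto
  finally have "0 < (\<Sum>x<q. hi x)"
    by simp
  with assms(2) range bounds show ?thesis
    using measure_MinCoupler_neq_le[where I = "{..<m}" and lo = lo and hi = hi and \<mu> = \<mu>]
    unfolding hi_def lo_def by (simp add: Bex_def)
qed

end
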